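(* Let $(A,G,\alpha)$ be a C*-dynamical system and $(J,H,\beta)$ a regular C*-dynamical subsystem. Then $(A,G,\alpha)$ is sub-induced from $(J,H,\beta)$ if and only if $H=\{g\in G:\alpha_g(J)=J\}$ and the ideals $\{\alpha_g(J)\}_{gH\in G/H}$ are pairwise orthogonal.
   Context: A C*-dynamical system $(A,G,\alpha)$: C*-algebra $A$, discrete group $G$, action $\alpha$. A closed ideal is regular if $J=J^{\perp\perp}$ ($X^\perp=\{a:ax=xa=0\ \forall x\in X\}$); ideals are orthogonal if they intersect trivially. A regular C*-dynamical subsystem $(J,H,\beta)$: $H\le G$, $J$ an $H$-invariant regular ideal of $A$, $\beta$ the restriction of $\alpha$. A system $(K,G,\gamma)$ is induced from $(J,H,\beta)$ if $\{\gamma_g(J)\}_{gH\in G/H}$ are pairwise orthogonal, $(\bigcup_g\gamma_g(J))^{\perp\perp}=K$, and $H=\{g:\gamma_g(J)=J\}$. $(A,G,\alpha)$ is sub-induced from $(J,H,\beta)$ if there is a nonzero $G$-invariant regular ideal $K\trianglelefteq A$ containing $J$ such that $(K,G,\alpha|_K)$ is induced from $(J,H,\beta)$. *)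

theory Defs
  imports "HOL-Analysis.Analysis" "HOL-Algebra.Coset"
begin

text \<open>A (not necessarily unital) C*-algebra: the whole type 'a, a real Banach algebra,
  equipped with a complex scalar multiplication sc (extending the real one) and an involution st.\<close>

definition cstar_algebra ::
  "(complex \<Rightarrow> 'a::{real_normed_algebra,banach} \<Rightarrow> 'a) \<Rightarrow> ('a \<Rightarrow> 'a) \<Rightarrow> bool" where
  "cstar_algebra sc st \<longleftrightarrow>
     (\<forall>r x. sc (complex_of_real r) x = scaleR r x) \<and>
     (\<forall>a b x. sc (a + b) x = sc a x + sc b x) \<and>
     (\<forall>a x y. sc a (x + y) = sc a x + sc a y) \<and>
     (\<forall>a b x. sc (a * b) x = sc a (sc b x)) \<and>
     (\<forall>a x. norm (sc a x) = norm a * norm x) \<and>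
     (\<forall>a x y. sc a (x * y) = sc a x * y \<and> sc a (x * y) = x * sc a y) \<and>
     (\<forall>x. st (st x) = x) \<and>
     (\<forall>x y. st (x + y) = st x + st y) \<and>
     (\<forall>a x. st (sc a x) = sc (cnj a) (st x)) \<and>
     (\<forall>x y. st (x * y) = st y * st x) \<and>
     (\<forall>x. norm (st x * x) = (norm x)\<^sup>2)"

definition star_aut ::
  "(complex \<Rightarrow> 'a::{real_normed_algebra,banach} \<Rightarrow> 'a) \<Rightarrow> ('a \<Rightarrow> 'a) \<Rightarrow> ('a \<Rightarrow> 'a) \<Rightarrow> bool" where
  "star_aut sc st f \<longleftrightarrow> bij f \<and>
     (\<forall>x y. f (x + y) = f x + f y) \<and> (\<forall>x y. f (x * y) = f x * f y) \<and>
     (\<forall>a x. f (sc a x) = sc a (f x)) \<and> (\<forall>x. f (st x) = st (f x))"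

definition cstar_dyn_system ::
  "(complex \<Rightarrow> 'a::{real_normed_algebra,banach} \<Rightarrow> 'a) \<Rightarrow> ('a \<Rightarrow> 'a) \<Rightarrow> ('g, 'm) monoid_scheme
     \<Rightarrow> ('g \<Rightarrow> 'a \<Rightarrow> 'a) \<Rightarrow> bool" where
  "cstar_dyn_system sc st G \<alpha> \<longleftrightarrow> cstar_algebra sc st \<and> group G \<and>
     (\<forall>g\<in>carrier G. star_aut sc st (\<alpha> g)) \<and>
     \<alpha> \<one>\<^bsub>G\<^esub> = id \<and>
     (\<forall>g\<in>carrier G. \<forall>h\<in>carrier G. \<alpha> (g \<otimes>\<^bsub>G\<^esub> h) = \<alpha> g \<circ> \<alpha> h)"

definition closed_ideal ::
  "(complex \<Rightarrow> 'a::{real_normed_algebra,banach} \<Rightarrow> 'a) \<Rightarrow> 'a set \<Rightarrow> bool" where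
  "closed_ideal sc J \<longleftrightarrow> closed J \<and> 0 \<in> J \<and>
     (\<forall>x\<in>J. \<forall>y\<in>J. x + y \<in> J) \<and> (\<forall>a. \<forall>x\<in>J. sc a x \<in> J) \<and>
     (\<forall>x\<in>J. \<forall>b. b * x \<in> J \<and> x * b \<in> J)"

text \<open>Annihilator of X computed inside the (sub)algebra K (K = UNIV for A itself).\<close>
definition perp_in :: "'a::ring set \<Rightarrow> 'a set \<Rightarrow> 'a set" where
  "perp_in K X = {a \<in> K. \<forall>x\<in>X. a * x = 0 \<and> x * a = 0}"

definition regular_ideal ::
  "(complex \<Rightarrow> 'a::{real_normed_algebra,banach} \<Rightarrow> 'a) \<Rightarrow> 'a set \<Rightarrow> bool" where
  "regular_ideal sc J \<longleftrightarrow> closed_ideal sc J \<and> J = perp_in UNIV (perp_in UNIV J)"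

definition orthogonal_ideals :: "'a::zero set \<Rightarrow> 'a set \<Rightarrow> bool" where
  "orthogonal_ideals I J \<longleftrightarrow> I \<inter> J = {0}"

text \<open>Regular C*-dynamical subsystem (J,H,beta), beta = restriction of alpha.\<close>
definition regular_subsystem ::
  "(complex \<Rightarrow> 'a::{real_normed_algebra,banach} \<Rightarrow> 'a) \<Rightarrow> ('g, 'm) monoid_scheme
     \<Rightarrow> ('g \<Rightarrow> 'a \<Rightarrow> 'a) \<Rightarrow> 'a set \<Rightarrow> 'g set \<Rightarrow> bool" where
  "regular_subsystem sc G \<alpha> J H \<longleftrightarrow> subgroup H G \<and> regular_ideal sc J \<and>
     (\<forall>h\<in>H. \<alpha> h ` J = J)"

definition induced_from ::
  "('g, 'm) monoid_scheme \<Rightarrow> ('g \<Rightarrow> 'a::{real_normed_algebra,banach} \<Rightarrow> 'a) \<Rightarrow> 'a set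
     \<Rightarrow> 'a set \<Rightarrow> 'g set \<Rightarrow> bool" where
  "induced_from G \<alpha> K J H \<longleftrightarrow>
     (\<forall>g1\<in>carrier G. \<forall>g2\<in>carrier G. g1 <#\<^bsub>G\<^esub> H \<noteq> g2 <#\<^bsub>G\<^esub> H \<longrightarrow>
         orthogonal_ideals (\<alpha> g1 ` J) (\<alpha> g2 ` J)) \<and>
     perp_in K (perp_in K (\<Union>g\<in>carrier G. \<alpha> g ` J)) = K \<and>
     H = {g \<in> carrier G. \<alpha> g ` J = J}"

definition sub_induced_from ::
  "(complex \<Rightarrow> 'a::{real_normed_algebra,banach} \<Rightarrow> 'a) \<Rightarrow> ('g, 'm) monoid_scheme
     \<Rightarrow> ('g \<Rightarrow> 'a \<Rightarrow> 'a) \<Rightarrow> 'a set \<Rightarrow> 'g set \<Rightarrow> bool" where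
  "sub_induced_from sc G \<alpha> J H \<longleftrightarrow>
     (\<exists>K. K \<noteq> {0} \<and> regular_ideal sc K \<and> (\<forall>g\<in>carrier G. \<alpha> g ` K = K) \<and>
          J \<subseteq> K \<and> induced_from G \<alpha> K J H)"

end

theory Submission
  imports Defs
begin

text \<open>The forward direction is part of the definition of being induced. Conversely, let X be
  the union of the translates \<open>\<alpha>\<^sub>g(J)\<close> and take \<open>K = X\<^sup>\<perp>\<^sup>\<perp>\<close>, a regular
  ideal because X is closed under multiplication by arbitrary elements. K contains J; it is
  G-invariant because every \<open>\<alpha>\<^sub>g\<close> permutes X and, being a ring automorphism, commutes
  with annihilators; and the double annihilator of X computed inside K is all of K, since K
  annihilates \<open>X\<^sup>\<perp>\<close>.\<close>

lemma subset_perp_in_perp_in: "X \<subseteq> perp_in UNIV (perp_in UNIV X)"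
  unfolding perp_in_def by auto

lemma perp_in_antimono: "X \<subseteq> Y \<Longrightarrow> perp_in K Y \<subseteq> perp_in K X"
  unfolding perp_in_def by auto

lemma perp_in_perp_in_perp_in:
  "perp_in UNIV (perp_in UNIV (perp_in UNIV X)) = perp_in UNIV X"
  by (meson perp_in_antimono subset_perp_in_perp_in subset_antisym)

lemma perp_in_relative_perp_perp:
  assumes "K \<subseteq> perp_in UNIV (perp_in UNIV X)"
  shows "perp_in K (perp_in K X) = K"
  using assms unfolding perp_in_def by blast

lemma perp_in_mult_closed:
  fixes X :: "'a::ring set"
  assumes "\<And>x b. x \<in> X \<Longrightarrow> x * b \<in> X \<and> b * x \<in> X"
    and "a \<in> perp_in UNIV X"
  shows "a * b \<in> perp_in UNIV X \<and> b * a \<in> perp_in UNIV X"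
proof -
  have "a * b * x = 0" "x * (a * b) = 0" "b * a * x = 0" "x * (b * a) = 0" if "x \<in> X" for x
  proof -
    have "a * x = 0" "x * a = 0" "a * (b * x) = 0" "(x * b) * a = 0"
      using assms that unfolding perp_in_def by auto
    then show "a * b * x = 0" "x * (a * b) = 0" "b * a * x = 0" "x * (b * a) = 0"
      by (metis mult.assoc mult_zero_left mult_zero_right)+
  qed
  then show ?thesis
    unfolding perp_in_def by simp
qed

lemma closed_perp_in:
  fixes X :: "'a::real_normed_algebra set"
  shows "closed (perp_in UNIV X)"
proof -
  have "perp_in UNIV X = (\<Inter>x\<in>X. {a. a * x = 0} \<inter> {a. x * a = 0})"
    unfolding perp_in_def by auto
  moreover have "closed ({a. a * x = 0} \<inter> {a. x * a = 0})" for x :: 'a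
    by (intro closed_Int closed_Collect_eq continuous_intros)
  ultimately show ?thesis by auto
qed

lemma cstar_algebra_scale_add:
  "cstar_algebra sc st \<Longrightarrow> sc a (x + y) = sc a x + sc a y"
  unfolding cstar_algebra_def by blast

lemma cstar_algebra_scale_mult:
  assumes "cstar_algebra sc st"
  shows "sc a x * y = sc a (x * y)" "x * sc a y = sc a (x * y)"
  using assms unfolding cstar_algebra_def by metis+

lemma closed_ideal_perp_in:
  fixes X :: "'a::{real_normed_algebra,banach} set"
  assumes "cstar_algebra sc st"
    and "\<And>x b. x \<in> X \<Longrightarrow> x * b \<in> X \<and> b * x \<in> X"
  shows "closed_ideal sc (perp_in UNIV X)"
proof -
  have sc_zero: "sc a 0 = 0" for a
    using cstar_algebra_scale_add[OF assms(1), of a 0 0] by simp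
  note sc_mult = cstar_algebra_scale_mult[OF assms(1)]
  show ?thesis
    unfolding closed_ideal_def
  proof (intro conjI ballI allI)
    show "closed (perp_in UNIV X)"
      by (rule closed_perp_in)
    show "0 \<in> perp_in UNIV X"
      unfolding perp_in_def by auto
    show "x + y \<in> perp_in UNIV X" if "x \<in> perp_in UNIV X" "y \<in> perp_in UNIV X" for x y
      using that unfolding perp_in_def by (auto simp: distrib_left distrib_right)
    show "sc a x \<in> perp_in UNIV X" if "x \<in> perp_in UNIV X" for a x
      using that unfolding perp_in_def by (auto simp: sc_zero sc_mult)
    show "b * x \<in> perp_in UNIV X" "x * b \<in> perp_in UNIV X" if "x \<in> perp_in UNIV X" for x b
      using perp_in_mult_closed[OF assms(2) that] by auto
  qed
qed

lemma regular_ideal_perp_in_perp_in: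
  fixes X :: "'a::{real_normed_algebra,banach} set"
  assumes "cstar_algebra sc st"
    and "\<And>x b. x \<in> X \<Longrightarrow> x * b \<in> X \<and> b * x \<in> X"
  shows "regular_ideal sc (perp_in UNIV (perp_in UNIV X))"
  unfolding regular_ideal_def perp_in_perp_in_perp_in
  using closed_ideal_perp_in[OF assms(1) perp_in_mult_closed[OF assms(2)]] by simp

lemma ring_automorphism_image_perp_in:
  fixes f :: "'a::ring \<Rightarrow> 'a"
  assumes "bij f" "\<And>x y. f (x + y) = f x + f y" "\<And>x y. f (x * y) = f x * f y"
  shows "f ` perp_in UNIV X = perp_in UNIV (f ` X)"
proof -
  have "f 0 = 0"
    using assms(2)[of 0 0] by simp
  then have f_eq_0: "f a = 0 \<longleftrightarrow> a = 0" for a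
    using bij_is_inj[OF assms(1)] by (metis injD)
  have perp_iff: "f a \<in> perp_in UNIV (f ` X) \<longleftrightarrow> a \<in> perp_in UNIV X" for a
    unfolding perp_in_def by (auto simp: assms(3)[symmetric] f_eq_0)
  show ?thesis
  proof (intro subset_antisym subsetI)
    fix y
    assume "y \<in> f ` perp_in UNIV X"
    then show "y \<in> perp_in UNIV (f ` X)"
      using perp_iff by auto
  next
    fix y
    assume y: "y \<in> perp_in UNIV (f ` X)"
    obtain a where a: "y = f a"
      using bij_is_surj[OF assms(1)] by (metis surjD)
    then have "a \<in> perp_in UNIV X"
      using y perp_iff by simp
    then show "y \<in> f ` perp_in UNIV X"
      using a by simp
  qed
qed

lemma cstar_dyn_systemD:
  assumes "cstar_dyn_system sc st G \<alpha>"
  shows "cstar_algebra sc st" "group G" "\<alpha> \<one>\<^bsub>G\<^esub> = id"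
    and "\<And>g. g \<in> carrier G \<Longrightarrow> star_aut sc st (\<alpha> g)"
    and "\<And>g h. g \<in> carrier G \<Longrightarrow> h \<in> carrier G \<Longrightarrow> \<alpha> (g \<otimes>\<^bsub>G\<^esub> h) = \<alpha> g \<circ> \<alpha> h"
  using assms unfolding cstar_dyn_system_def by simp_all

lemma star_autD:
  assumes "star_aut sc st f"
  shows "bij f" "\<And>x y. f (x + y) = f x + f y" "\<And>x y. f (x * y) = f x * f y"
  using assms unfolding star_aut_def by simp_all

definition orbit_union :: "('g, 'm) monoid_scheme \<Rightarrow> ('g \<Rightarrow> 'a \<Rightarrow> 'a) \<Rightarrow> 'a set \<Rightarrow> 'a set" where
  "orbit_union G \<alpha> J = (\<Union>g\<in>carrier G. \<alpha> g ` J)"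

lemma subset_orbit_union:
  assumes "cstar_dyn_system sc st G \<alpha>"
  shows "J \<subseteq> orbit_union G \<alpha> J"
proof -
  have "\<one>\<^bsub>G\<^esub> \<in> carrier G"
    using group.is_monoid[OF cstar_dyn_systemD(2)[OF assms]] by (rule monoid.one_closed)
  then have "\<alpha> \<one>\<^bsub>G\<^esub> ` J \<subseteq> orbit_union G \<alpha> J"
    unfolding orbit_union_def by blast
  then show ?thesis
    by (simp add: cstar_dyn_systemD(3)[OF assms])
qed

lemma orbit_union_invariant:
  fixes G (structure)
  assumes "cstar_dyn_system sc st G \<alpha>" and g: "g \<in> carrier G"
  shows "\<alpha> g ` orbit_union G \<alpha> J = orbit_union G \<alpha> J"
proof -
  interpret group G
    by (rule cstar_dyn_systemD(2)[OF assms(1)])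
  have translate: "(\<lambda>h. g \<otimes> h) ` carrier G = carrier G"
  proof (intro subset_antisym subsetI)
    show "k \<in> carrier G" if "k \<in> (\<lambda>h. g \<otimes> h) ` carrier G" for k
      using that g by auto
    show "k \<in> (\<lambda>h. g \<otimes> h) ` carrier G" if k: "k \<in> carrier G" for k
    proof (rule image_eqI)
      show "k = g \<otimes> (inv g \<otimes> k)"
        using g k by (simp add: m_assoc[symmetric])
      show "inv g \<otimes> k \<in> carrier G"
        using g k by simp
    qed
  qed
  have "\<alpha> g ` \<alpha> h ` J = \<alpha> (g \<otimes> h) ` J" if "h \<in> carrier G" for h
    using cstar_dyn_systemD(5)[OF assms(1) g that] by (simp add: image_comp)
  then have "\<alpha> g ` orbit_union G \<alpha> J = (\<Union>h\<in>carrier G. \<alpha> (g \<otimes> h) ` J)"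
    unfolding orbit_union_def image_UN by simp
  also have "\<dots> = (\<Union>k\<in>(\<lambda>h. g \<otimes> h) ` carrier G. \<alpha> k ` J)"
    by (simp add: image_image)
  also have "\<dots> = orbit_union G \<alpha> J"
    unfolding orbit_union_def translate ..
  finally show ?thesis .
qed

lemma orbit_union_mult_closed:
  assumes "cstar_dyn_system sc st G \<alpha>" and "closed_ideal sc J"
    and "x \<in> orbit_union G \<alpha> J"
  shows "x * b \<in> orbit_union G \<alpha> J \<and> b * x \<in> orbit_union G \<alpha> J"
proof -
  obtain g j where g: "g \<in> carrier G" and j: "j \<in> J" and x: "x = \<alpha> g j"
    using assms(3) unfolding orbit_union_def by auto
  note aut = star_autD[OF cstar_dyn_systemD(4)[OF assms(1) g]]
  obtain c where c: "b = \<alpha> g c"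
    using bij_is_surj[OF aut(1)] by (metis surjD)
  have "j * c \<in> J" "c * j \<in> J"
    using assms(2) j unfolding closed_ideal_def by auto
  then show ?thesis
    using g unfolding orbit_union_def x c aut(3)[symmetric] by auto
qed

lemma perp_perp_orbit_union_invariant:
  assumes "cstar_dyn_system sc st G \<alpha>" and "g \<in> carrier G"
  shows "\<alpha> g ` perp_in UNIV (perp_in UNIV (orbit_union G \<alpha> J))
           = perp_in UNIV (perp_in UNIV (orbit_union G \<alpha> J))"
proof -
  note aut = star_autD[OF cstar_dyn_systemD(4)[OF assms]]
  show ?thesis
    by (simp add: ring_automorphism_image_perp_in[OF aut] orbit_union_invariant[OF assms])
qed

lemma regular_ideal_perp_perp_orbit_union:
  assumes "cstar_dyn_system sc st G \<alpha>" and "closed_ideal sc J"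
  shows "regular_ideal sc (perp_in UNIV (perp_in UNIV (orbit_union G \<alpha> J)))"
  using regular_ideal_perp_in_perp_in[OF cstar_dyn_systemD(1)[OF assms(1)]]
    orbit_union_mult_closed[OF assms] by blast

lemma induced_from_perp_perp_orbit_union:
  assumes "H = {g \<in> carrier G. \<alpha> g ` J = J}"
    and "\<forall>g1\<in>carrier G. \<forall>g2\<in>carrier G. g1 <#\<^bsub>G\<^esub> H \<noteq> g2 <#\<^bsub>G\<^esub> H \<longrightarrow>
           orthogonal_ideals (\<alpha> g1 ` J) (\<alpha> g2 ` J)"
  shows "induced_from G \<alpha> (perp_in UNIV (perp_in UNIV (orbit_union G \<alpha> J))) J H"
  using assms perp_in_relative_perp_perp[OF order_refl]
  unfolding induced_from_def orbit_union_def by blast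

theorem proposition3p10:
  fixes sc :: "complex \<Rightarrow> 'a::{real_normed_algebra,banach} \<Rightarrow> 'a"
    and st :: "'a \<Rightarrow> 'a"
    and G :: "('g, 'm) monoid_scheme"
    and \<alpha> :: "'g \<Rightarrow> 'a \<Rightarrow> 'a"
    and J :: "'a set" and H :: "'g set"
  assumes "cstar_dyn_system sc st G \<alpha>"
    and "regular_subsystem sc G \<alpha> J H"
    and "J \<noteq> {0}"
  shows "sub_induced_from sc G \<alpha> J H \<longleftrightarrow>
         (H = {g \<in> carrier G. \<alpha> g ` J = J} \<and>
          (\<forall>g1\<in>carrier G. \<forall>g2\<in>carrier G. g1 <#\<^bsub>G\<^esub> H \<noteq> g2 <#\<^bsub>G\<^esub> H \<longrightarrow>
              orthogonal_ideals (\<alpha> g1 ` J) (\<alpha> g2 ` J)))"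
proof
  show "H = {g \<in> carrier G. \<alpha> g ` J = J} \<and>
          (\<forall>g1\<in>carrier G. \<forall>g2\<in>carrier G. g1 <#\<^bsub>G\<^esub> H \<noteq> g2 <#\<^bsub>G\<^esub> H \<longrightarrow>
              orthogonal_ideals (\<alpha> g1 ` J) (\<alpha> g2 ` J))"
    if "sub_induced_from sc G \<alpha> J H"
    using that unfolding sub_induced_from_def induced_from_def by blast
next
  assume "H = {g \<in> carrier G. \<alpha> g ` J = J} \<and>
          (\<forall>g1\<in>carrier G. \<forall>g2\<in>carrier G. g1 <#\<^bsub>G\<^esub> H \<noteq> g2 <#\<^bsub>G\<^esub> H \<longrightarrow>
              orthogonal_ideals (\<alpha> g1 ` J) (\<alpha> g2 ` J))"
  then have induced: "induced_from G \<alpha> (perp_in UNIV (perp_in UNIV (orbit_union G \<alpha> J))) J H"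
    by (intro induced_from_perp_perp_orbit_union) simp_all
  have J_ideal: "closed_ideal sc J"
    using assms(2) unfolding regular_subsystem_def regular_ideal_def by blast
  have J_subset: "J \<subseteq> perp_in UNIV (perp_in UNIV (orbit_union G \<alpha> J))"
    using subset_orbit_union[OF assms(1)] subset_perp_in_perp_in by blast
  then have "perp_in UNIV (perp_in UNIV (orbit_union G \<alpha> J)) \<noteq> {0}"
    using assms(3) J_ideal unfolding closed_ideal_def by blast
  then show "sub_induced_from sc G \<alpha> J H"
    unfolding sub_induced_from_def
    using regular_ideal_perp_perp_orbit_union[OF assms(1) J_ideal]
      perp_perp_orbit_union_invariant[OF assms(1)] J_subset induced by blast
qed

end
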